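(* Let $S$ and $T$ be monoids. Then $S\times T$ is finitely right equated if and only if both $S$ and $T$ are finitely right equated.
   Context: For a semigroup $S$ and $a\in S$, $\mathbf{r}_S(a)=\{(s,t)\in S\times S\mid as=at\}$; $S$ is finitely right equated if each $\mathbf{r}_S(a)$ is finitely generated as a right congruence (the smallest right congruence containing some finite set). *)

theory Defs
  imports Main
begin

definition right_congruence :: "('a \<Rightarrow> 'a \<Rightarrow> 'a) \<Rightarrow> ('a \<times> 'a) set \<Rightarrow> bool" where
  "right_congruence mul \<rho> \<longleftrightarrow> equiv UNIV \<rho> \<and>
     (\<forall>s t u. (s, t) \<in> \<rho> \<longrightarrow> (mul s u, mul t u) \<in> \<rho>)"

definition right_cong_gen :: "('a \<Rightarrow> 'a \<Rightarrow> 'a) \<Rightarrow> ('a \<times> 'a) set \<Rightarrow> ('a \<times> 'a) set" where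
  "right_cong_gen mul X = \<Inter> {\<rho>. right_congruence mul \<rho> \<and> X \<subseteq> \<rho>}"

definition r_ann :: "('a \<Rightarrow> 'a \<Rightarrow> 'a) \<Rightarrow> 'a \<Rightarrow> ('a \<times> 'a) set" where
  "r_ann mul a = {(s, t). mul a s = mul a t}"

definition finitely_right_equated :: "('a \<Rightarrow> 'a \<Rightarrow> 'a) \<Rightarrow> bool" where
  "finitely_right_equated mul \<longleftrightarrow>
     (\<forall>a. \<exists>X. finite X \<and> r_ann mul a = right_cong_gen mul X)"

definition prod_mult :: "('a \<Rightarrow> 'a \<Rightarrow> 'a) \<Rightarrow> ('b \<Rightarrow> 'b \<Rightarrow> 'b) \<Rightarrow>
    ('a \<times> 'b) \<Rightarrow> ('a \<times> 'b) \<Rightarrow> ('a \<times> 'b)" where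
  "prod_mult m1 m2 x y = (m1 (fst x) (fst y), m2 (snd x) (snd y))"

end

theory Submission
  imports Defs
begin

text \<open>Each factor is a retract of the product (via \<open>s \<mapsto> (s, 1)\<close> and the projection), and
  being finitely right equated passes to retracts: generators of \<open>\<^bold>r((a,1))\<close> project to
  generators of \<open>\<^bold>r(a)\<close>. Conversely, \<open>\<^bold>r((a,b))\<close> is generated by the generators of \<open>\<^bold>r(a)\<close>
  padded with \<open>1\<close> in the second coordinate together with those of \<open>\<^bold>r(b)\<close> padded in the first:
  if \<open>a s = a t\<close> and \<open>b s' = b t'\<close>, one passes from \<open>(s, s')\<close> to \<open>(t, s')\<close> by right-multiplying
  the first kind of generators by \<open>(1, s')\<close>, and from \<open>(t, s')\<close> to \<open>(t, t')\<close> by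
  right-multiplying the second kind by \<open>(t, 1)\<close>.\<close>

lemma right_congruenceI:
  assumes "\<And>x. (x, x) \<in> \<rho>"
    and "\<And>x y. (x, y) \<in> \<rho> \<Longrightarrow> (y, x) \<in> \<rho>"
    and "\<And>x y z. (x, y) \<in> \<rho> \<Longrightarrow> (y, z) \<in> \<rho> \<Longrightarrow> (x, z) \<in> \<rho>"
    and "\<And>s t u. (s, t) \<in> \<rho> \<Longrightarrow> (mul s u, mul t u) \<in> \<rho>"
  shows "right_congruence mul \<rho>"
  unfolding right_congruence_def equiv_def
proof (intro conjI)
  show "refl_on UNIV \<rho>" using assms(1) by (simp add: refl_on_def)
  show "sym \<rho>" using assms(2) by (rule symI)
  show "trans \<rho>" using assms(3) by (rule transI)
qed (use assms(4) in auto)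

lemma
  assumes "right_congruence mul \<rho>"
  shows right_congruence_refl: "(x, x) \<in> \<rho>"
    and right_congruence_sym: "(x, y) \<in> \<rho> \<Longrightarrow> (y, x) \<in> \<rho>"
    and right_congruence_trans: "(x, y) \<in> \<rho> \<Longrightarrow> (y, z) \<in> \<rho> \<Longrightarrow> (x, z) \<in> \<rho>"
    and right_congruence_mult_right: "(s, t) \<in> \<rho> \<Longrightarrow> (mul s u, mul t u) \<in> \<rho>"
proof -
  have "equiv UNIV \<rho>" and "\<forall>s t u. (s, t) \<in> \<rho> \<longrightarrow> (mul s u, mul t u) \<in> \<rho>"
    using assms unfolding right_congruence_def by auto
  then show "(x, x) \<in> \<rho>" "(x, y) \<in> \<rho> \<Longrightarrow> (y, x) \<in> \<rho>"
    "(x, y) \<in> \<rho> \<Longrightarrow> (y, z) \<in> \<rho> \<Longrightarrow> (x, z) \<in> \<rho>"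
    "(s, t) \<in> \<rho> \<Longrightarrow> (mul s u, mul t u) \<in> \<rho>"
    by (auto simp: equiv_def refl_on_def dest: symD transD)
qed

lemma right_cong_gen_least:
  "right_congruence mul \<rho> \<Longrightarrow> X \<subseteq> \<rho> \<Longrightarrow> right_cong_gen mul X \<subseteq> \<rho>"
  unfolding right_cong_gen_def by blast

lemma right_cong_gen_superset: "X \<subseteq> right_cong_gen mul X"
  unfolding right_cong_gen_def by blast

lemma right_congruence_Inter:
  assumes "\<And>\<rho>. \<rho> \<in> R \<Longrightarrow> right_congruence mul \<rho>"
  shows "right_congruence mul (\<Inter> R)"
proof (rule right_congruenceI; rule InterI)
  fix \<rho> assume "\<rho> \<in> R"
  note cong = assms[OF this]
  show "(x, x) \<in> \<rho>" for x
    by (rule right_congruence_refl[OF cong])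
  show "(y, x) \<in> \<rho>" if "(x, y) \<in> \<Inter> R" for x y
    using that \<open>\<rho> \<in> R\<close> by (blast intro: right_congruence_sym[OF cong])
  show "(x, z) \<in> \<rho>" if "(x, y) \<in> \<Inter> R" and "(y, z) \<in> \<Inter> R" for x y z
    using that \<open>\<rho> \<in> R\<close> by (blast intro: right_congruence_trans[OF cong])
  show "(mul s u, mul t u) \<in> \<rho>" if "(s, t) \<in> \<Inter> R" for s t u
    using that \<open>\<rho> \<in> R\<close> by (blast intro: right_congruence_mult_right[OF cong])
qed

lemma right_congruence_right_cong_gen: "right_congruence mul (right_cong_gen mul X)"
  unfolding right_cong_gen_def by (rule right_congruence_Inter) blast

lemma right_congruence_r_ann:
  assumes "semigroup mul"
  shows "right_congruence mul (r_ann mul a)"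
  by (rule right_congruenceI) (simp_all add: r_ann_def semigroup.assoc[OF assms, symmetric])

text \<open>The map \<open>f\<close> need not be a homomorphism: \<open>u \<mapsto> (u, s')\<close> satisfies the hypothesis with
  \<open>g w = (w, 1)\<close>.\<close>

lemma right_congruence_inv_image:
  assumes "\<And>u w. f (mul u w) = mul' (f u) (g w)"
    and "right_congruence mul' \<rho>"
  shows "right_congruence mul (inv_image \<rho> f)"
proof (rule right_congruenceI; unfold in_inv_image)
  show "(f x, f x) \<in> \<rho>" for x
    by (rule right_congruence_refl[OF assms(2)])
  show "(f y, f x) \<in> \<rho>" if "(f x, f y) \<in> \<rho>" for x y
    by (rule right_congruence_sym[OF assms(2) that])
  show "(f x, f z) \<in> \<rho>" if "(f x, f y) \<in> \<rho>" and "(f y, f z) \<in> \<rho>" for x y z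
    by (rule right_congruence_trans[OF assms(2) that])
  show "(f (mul s u), f (mul t u)) \<in> \<rho>" if "(f s, f t) \<in> \<rho>" for s t u
    unfolding assms(1) by (rule right_congruence_mult_right[OF assms(2) that])
qed

lemma right_cong_gen_map:
  assumes "\<And>u w. f (mul u w) = mul' (f u) (g w)"
    and "right_congruence mul' \<rho>"
    and "\<And>x y. (x, y) \<in> X \<Longrightarrow> (f x, f y) \<in> \<rho>"
    and "(x, y) \<in> right_cong_gen mul X"
  shows "(f x, f y) \<in> \<rho>"
proof -
  have "right_cong_gen mul X \<subseteq> inv_image \<rho> f"
    by (rule right_cong_gen_least[OF right_congruence_inv_image[where g = g, OF assms(1,2)]])
      (use assms(3) in auto)
  then show ?thesis using assms(4) by auto
qed

lemma finitely_right_equated_retract: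
  assumes "semigroup mul'"
    and f_hom: "\<And>x y. f (mul x y) = mul' (f x) (f y)"
    and e_hom: "\<And>x y. e (mul' x y) = mul (e x) (e y)"
    and f_e: "\<And>x. f (e x) = x"
    and "finitely_right_equated mul"
  shows "finitely_right_equated mul'"
  unfolding finitely_right_equated_def
proof
  fix b
  obtain Z where "finite Z" and Z: "r_ann mul (e b) = right_cong_gen mul Z"
    using assms(5) unfolding finitely_right_equated_def by blast
  define X where "X = map_prod f f ` Z"
  have "X \<subseteq> r_ann mul' b"
  proof
    fix p assume "p \<in> X"
    then obtain x y where p: "p = (f x, f y)" and "(x, y) \<in> Z"
      unfolding X_def by auto
    then have "mul (e b) x = mul (e b) y"
      using Z right_cong_gen_superset unfolding r_ann_def by blast
    then have "f (mul (e b) x) = f (mul (e b) y)" by simp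
    then show "p \<in> r_ann mul' b"
      by (simp add: p r_ann_def f_hom f_e)
  qed
  then have "right_cong_gen mul' X \<subseteq> r_ann mul' b"
    by (rule right_cong_gen_least[OF right_congruence_r_ann[OF assms(1)]])
  moreover have "r_ann mul' b \<subseteq> right_cong_gen mul' X"
  proof safe
    fix s t assume "(s, t) \<in> r_ann mul' b"
    then have "e (mul' b s) = e (mul' b t)" by (simp add: r_ann_def)
    then have st: "(e s, e t) \<in> right_cong_gen mul Z"
      by (simp add: Z[symmetric] r_ann_def e_hom)
    have "(f x, f y) \<in> right_cong_gen mul' X" if "(x, y) \<in> Z" for x y
      using that right_cong_gen_superset unfolding X_def by fastforce
    then have "(f (e s), f (e t)) \<in> right_cong_gen mul' X"
      by (rule right_cong_gen_map[where f = f and mul = mul and mul' = mul' and g = f,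
            OF f_hom right_congruence_right_cong_gen _ st])
    then show "(s, t) \<in> right_cong_gen mul' X" by (simp add: f_e)
  qed
  moreover have "finite X"
    by (simp add: X_def \<open>finite Z\<close>)
  ultimately show "\<exists>X. finite X \<and> r_ann mul' b = right_cong_gen mul' X"
    by blast
qed

lemma semigroup_prod_mult: "semigroup m1 \<Longrightarrow> semigroup m2 \<Longrightarrow> semigroup (prod_mult m1 m2)"
  by (simp add: semigroup_def prod_mult_def)

lemma finitely_right_equated_prod_mult:
  assumes "finitely_right_equated ((*) :: 'a::monoid_mult \<Rightarrow> 'a \<Rightarrow> 'a)"
    and "finitely_right_equated ((*) :: 'b::monoid_mult \<Rightarrow> 'b \<Rightarrow> 'b)"
  shows "finitely_right_equated (prod_mult ((*) :: 'a \<Rightarrow> 'a \<Rightarrow> 'a) ((*) :: 'b \<Rightarrow> 'b \<Rightarrow> 'b))"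
  unfolding finitely_right_equated_def
proof (intro allI)
  let ?m = "prod_mult ((*) :: 'a \<Rightarrow> 'a \<Rightarrow> 'a) ((*) :: 'b \<Rightarrow> 'b \<Rightarrow> 'b)"
  fix p :: "'a \<times> 'b"
  obtain a b where p: "p = (a, b)" by fastforce
  obtain X where "finite X" and X: "r_ann (*) a = right_cong_gen (*) X"
    using assms(1) unfolding finitely_right_equated_def by blast
  obtain Y where "finite Y" and Y: "r_ann (*) b = right_cong_gen (*) Y"
    using assms(2) unfolding finitely_right_equated_def by blast
  define Z where "Z = map_prod (\<lambda>x. (x, 1)) (\<lambda>x. (x, 1)) ` X \<union> map_prod (Pair 1) (Pair 1) ` Y"
  let ?G = "right_cong_gen ?m Z"
  have G: "right_congruence ?m ?G"
    by (rule right_congruence_right_cong_gen)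
  have XA: "X \<subseteq> r_ann (*) a" and YB: "Y \<subseteq> r_ann (*) b"
    by (simp_all add: X Y right_cong_gen_superset)
  have "Z \<subseteq> r_ann ?m (a, b)"
  proof
    fix q assume "q \<in> Z"
    then consider x y where "(x, y) \<in> X" "q = ((x, 1), (y, 1))"
      | x y where "(x, y) \<in> Y" "q = ((1, x), (1, y))"
      unfolding Z_def by auto
    then show "q \<in> r_ann ?m (a, b)"
      by cases (use XA YB in \<open>auto simp: r_ann_def prod_mult_def\<close>)
  qed
  then have "?G \<subseteq> r_ann ?m (a, b)"
    by (rule right_cong_gen_least[OF right_congruence_r_ann[OF
          semigroup_prod_mult[OF mult.semigroup_axioms mult.semigroup_axioms]]])
  moreover have "r_ann ?m (a, b) \<subseteq> ?G"
  proof safe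
    fix s s' t t' assume "((s, s'), (t, t')) \<in> r_ann ?m (a, b)"
    then have "a * s = a * t" and "b * s' = b * t'"
      by (simp_all add: r_ann_def prod_mult_def)
    then have st: "(s, t) \<in> right_cong_gen (*) X" and st': "(s', t') \<in> right_cong_gen (*) Y"
      by (simp_all add: X[symmetric] Y[symmetric] r_ann_def)
    have padX: "((x, s'), (y, s')) \<in> ?G" if "(x, y) \<in> X" for x y
    proof -
      have "((x, 1), (y, 1)) \<in> Z"
        using that unfolding Z_def by force
      then have "((x, 1), (y, 1)) \<in> ?G"
        using right_cong_gen_superset by blast
      then show ?thesis
        using right_congruence_mult_right[OF G, of "(x, 1)" "(y, 1)" "(1, s')"]
        by (simp add: prod_mult_def)
    qed
    have first: "((s, s'), (t, s')) \<in> ?G"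
      by (rule right_cong_gen_map[where f = "\<lambda>u. (u, s')" and g = "\<lambda>w. (w, 1)"
            and mul = "(*)" and mul' = ?m, OF _ G padX st]) (simp add: prod_mult_def)
    have padY: "((t, x), (t, y)) \<in> ?G" if "(x, y) \<in> Y" for x y
    proof -
      have "((1, x), (1, y)) \<in> Z"
        using that unfolding Z_def by force
      then have "((1, x), (1, y)) \<in> ?G"
        using right_cong_gen_superset by blast
      then show ?thesis
        using right_congruence_mult_right[OF G, of "(1, x)" "(1, y)" "(t, 1)"]
        by (simp add: prod_mult_def)
    qed
    have second: "((t, s'), (t, t')) \<in> ?G"
      by (rule right_cong_gen_map[where f = "Pair t" and g = "Pair 1"
            and mul = "(*)" and mul' = ?m, OF _ G padY st']) (simp add: prod_mult_def)
    show "((s, s'), (t, t')) \<in> ?G"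
      using right_congruence_trans[OF G first second] .
  qed
  moreover have "finite Z"
    by (simp add: Z_def \<open>finite X\<close> \<open>finite Y\<close>)
  ultimately show "\<exists>Z. finite Z \<and> r_ann ?m p = right_cong_gen ?m Z"
    unfolding p by blast
qed

theorem mainTheorem8:
  shows "finitely_right_equated
           (prod_mult ((*) :: 'a::monoid_mult \<Rightarrow> 'a \<Rightarrow> 'a) ((*) :: 'b::monoid_mult \<Rightarrow> 'b \<Rightarrow> 'b))
         \<longleftrightarrow> finitely_right_equated ((*) :: 'a \<Rightarrow> 'a \<Rightarrow> 'a)
           \<and> finitely_right_equated ((*) :: 'b \<Rightarrow> 'b \<Rightarrow> 'b)"
proof
  assume prod: "finitely_right_equated (prod_mult ((*) :: 'a \<Rightarrow> 'a \<Rightarrow> 'a) ((*) :: 'b \<Rightarrow> 'b \<Rightarrow> 'b))"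
  have "finitely_right_equated ((*) :: 'a \<Rightarrow> 'a \<Rightarrow> 'a)"
    by (rule finitely_right_equated_retract[where f = fst and e = "\<lambda>x. (x, 1)", OF _ _ _ _ prod])
      (simp_all add: mult.semigroup_axioms prod_mult_def)
  moreover have "finitely_right_equated ((*) :: 'b \<Rightarrow> 'b \<Rightarrow> 'b)"
    by (rule finitely_right_equated_retract[where f = snd and e = "Pair 1", OF _ _ _ _ prod])
      (simp_all add: mult.semigroup_axioms prod_mult_def)
  ultimately show "finitely_right_equated ((*) :: 'a \<Rightarrow> 'a \<Rightarrow> 'a)
    \<and> finitely_right_equated ((*) :: 'b \<Rightarrow> 'b \<Rightarrow> 'b)" ..
next
  assume "finitely_right_equated ((*) :: 'a \<Rightarrow> 'a \<Rightarrow> 'a)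
    \<and> finitely_right_equated ((*) :: 'b \<Rightarrow> 'b \<Rightarrow> 'b)"
  then show "finitely_right_equated (prod_mult ((*) :: 'a \<Rightarrow> 'a \<Rightarrow> 'a) ((*) :: 'b \<Rightarrow> 'b \<Rightarrow> 'b))"
    by (intro finitely_right_equated_prod_mult) auto
qed

end
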